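(* Let $\kappa\neq0$ and let $S$ be a $\kappa$-cylindrical surface with directrix $\alpha=(x,z)$, where $(x,z,\theta)$ solves $x'=\cos\theta$, $z'=\sin\theta$, $\theta'=\kappa z$ on $\mathbb R$. Assume that $\alpha$ crosses the $x$-axis at $s=s_0$, i.e. $z(s_0)=0$. Then the curve $\alpha$ is symmetric with respect to the point $\alpha(s_0)$.
   Context: A $\kappa$-cylindrical surface ($\kappa\ne0$ constant) is a cylindrical ruled surface in $\mathbb R^3$ locally satisfying $\operatorname{div}\big(Du/\sqrt{1+|Du|^2}\big)=\kappa u$ (mean curvature equal to $\kappa z/2$). It has horizontal rulings and is of the form $(x(s),t,z(s))$, with arc-length directrix $\alpha=(x,z)$ and $\theta$ the angle between $\partial/\partial x$ and $\alpha'$, satisfying the system above. *)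

theory Defs
  imports Complex_Main
begin

end

theory Submission
  imports Defs
begin

(*
  The reflection s \<mapsto> 2 s\<^sub>0 - s through the parameter s\<^sub>0, combined with
  z \<mapsto> -z and x \<mapsto> 2 x(s\<^sub>0) - x, maps solutions of the system to solutions.
  When z(s\<^sub>0) = 0 the reflected solution has the same initial data at s\<^sub>0,
  so by uniqueness for the (Lipschitz) subsystem in z and \<theta> it coincides with
  the original one; then x' = cos \<theta> is even about s\<^sub>0, which gives the
  point symmetry of \<alpha> about \<alpha>(s\<^sub>0). Uniqueness is proved by a Gronwall
  estimate on the squared distance of two solutions.
*)

lemma abs_sin_diff_le: "\<bar>sin a - sin b\<bar> \<le> \<bar>a - b\<bar>" for a b :: real
proof -
  have "\<bar>sin a - sin b\<bar> = 2 * \<bar>sin ((a - b) / 2)\<bar> * \<bar>cos ((a + b) / 2)\<bar>"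
    by (simp add: sin_diff_sin abs_mult)
  also have "\<dots> \<le> 2 * \<bar>sin ((a - b) / 2)\<bar>"
    using abs_cos_le_one[of "(a + b) / 2"] by (simp add: mult_left_le)
  also have "\<dots> \<le> \<bar>a - b\<bar>"
    using abs_sin_x_le_abs_x[of "(a - b) / 2"] by simp
  finally show ?thesis .
qed

lemma DERIV_abs_le_self_vanishes:
  fixes E E' :: "real \<Rightarrow> real" and C a :: real
  assumes deriv: "\<And>s. (E has_real_derivative E' s) (at s)"
    and bound: "\<And>s. \<bar>E' s\<bar> \<le> C * E s"
    and nonneg: "\<And>s. 0 \<le> E s"
    and "E a = 0"
  shows "E s = 0"
proof -
  have "E s * exp (- C * s) \<le> E a * exp (- C * a)" if "a \<le> s"
  proof (rule DERIV_nonpos_imp_nonincreasing[OF that])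
    fix t
    have "((\<lambda>s. E s * exp (- C * s)) has_real_derivative (E' t - C * E t) * exp (- C * t)) (at t)"
      by (rule derivative_eq_intros deriv | simp add: algebra_simps)+
    moreover have "(E' t - C * E t) * exp (- C * t) \<le> 0"
      using bound[of t] by (simp add: mult_nonpos_nonneg)
    ultimately show "\<exists>y. ((\<lambda>s. E s * exp (- C * s)) has_real_derivative y) (at t) \<and> y \<le> 0"
      by blast
  qed
  moreover have "E s * exp (C * s) \<le> E a * exp (C * a)" if "s \<le> a"
  proof (rule DERIV_nonneg_imp_nondecreasing[OF that])
    fix t
    have "((\<lambda>s. E s * exp (C * s)) has_real_derivative (E' t + C * E t) * exp (C * t)) (at t)"
      by (rule derivative_eq_intros deriv | simp add: algebra_simps)+
    moreover have "0 \<le> (E' t + C * E t) * exp (C * t)"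
      using bound[of t] by simp
    ultimately show "\<exists>y. ((\<lambda>s. E s * exp (C * s)) has_real_derivative y) (at t) \<and> 0 \<le> y"
      by blast
  qed
  ultimately have "E s \<le> 0"
    using \<open>E a = 0\<close> by (cases "a \<le> s") (auto simp: mult_le_0_iff)
  with nonneg show ?thesis
    by (simp add: antisym)
qed

lemma cylindrical_profile_unique:
  fixes \<kappa> a :: real and z\<^sub>1 \<theta>\<^sub>1 z\<^sub>2 \<theta>\<^sub>2 :: "real \<Rightarrow> real"
  assumes dz\<^sub>1: "\<And>s. (z\<^sub>1 has_real_derivative sin (\<theta>\<^sub>1 s)) (at s)"
    and d\<theta>\<^sub>1: "\<And>s. (\<theta>\<^sub>1 has_real_derivative \<kappa> * z\<^sub>1 s) (at s)"
    and dz\<^sub>2: "\<And>s. (z\<^sub>2 has_real_derivative sin (\<theta>\<^sub>2 s)) (at s)"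
    and d\<theta>\<^sub>2: "\<And>s. (\<theta>\<^sub>2 has_real_derivative \<kappa> * z\<^sub>2 s) (at s)"
    and "z\<^sub>1 a = z\<^sub>2 a" "\<theta>\<^sub>1 a = \<theta>\<^sub>2 a"
  shows "z\<^sub>1 s = z\<^sub>2 s \<and> \<theta>\<^sub>1 s = \<theta>\<^sub>2 s"
proof -
  define u where "u s = z\<^sub>1 s - z\<^sub>2 s" for s
  define v where "v s = \<theta>\<^sub>1 s - \<theta>\<^sub>2 s" for s
  define \<sigma> where "\<sigma> s = sin (\<theta>\<^sub>1 s) - sin (\<theta>\<^sub>2 s)" for s
  have du: "(u has_real_derivative \<sigma> s) (at s)" for s
    unfolding u_def \<sigma>_def by (intro derivative_intros dz\<^sub>1 dz\<^sub>2)
  have dv: "(v has_real_derivative \<kappa> * u s) (at s)" for s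
    unfolding v_def u_def
    by (rule derivative_eq_intros d\<theta>\<^sub>1 d\<theta>\<^sub>2 | simp add: algebra_simps)+
  have deriv: "((\<lambda>s. (u s)\<^sup>2 + (v s)\<^sup>2) has_real_derivative
      2 * u s * \<sigma> s + 2 * v s * (\<kappa> * u s)) (at s)" for s
    by (rule derivative_eq_intros du dv | simp)+
  have bound: "\<bar>2 * u s * \<sigma> s + 2 * v s * (\<kappa> * u s)\<bar> \<le> (1 + \<bar>\<kappa>\<bar>) * ((u s)\<^sup>2 + (v s)\<^sup>2)" for s
  proof -
    have "\<bar>2 * u s * \<sigma> s + 2 * v s * (\<kappa> * u s)\<bar> \<le> \<bar>2 * u s * \<sigma> s\<bar> + \<bar>2 * v s * (\<kappa> * u s)\<bar>"
      by (rule abs_triangle_ineq)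
    also have "\<dots> = 2 * \<bar>u s\<bar> * \<bar>\<sigma> s\<bar> + \<bar>\<kappa>\<bar> * (2 * \<bar>u s\<bar> * \<bar>v s\<bar>)"
      by (simp add: abs_mult mult_ac)
    also have "\<dots> \<le> 2 * \<bar>u s\<bar> * \<bar>v s\<bar> + \<bar>\<kappa>\<bar> * (2 * \<bar>u s\<bar> * \<bar>v s\<bar>)"
      using abs_sin_diff_le[of "\<theta>\<^sub>1 s" "\<theta>\<^sub>2 s"] unfolding \<sigma>_def v_def
      by (intro add_right_mono mult_left_mono) auto
    also have "\<dots> = (1 + \<bar>\<kappa>\<bar>) * (2 * \<bar>u s\<bar> * \<bar>v s\<bar>)"
      by (simp add: algebra_simps)
    also have "\<dots> \<le> (1 + \<bar>\<kappa>\<bar>) * ((u s)\<^sup>2 + (v s)\<^sup>2)"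
      using sum_squares_bound[of "\<bar>u s\<bar>" "\<bar>v s\<bar>"] by (intro mult_left_mono) auto
    finally show ?thesis .
  qed
  have "(u s)\<^sup>2 + (v s)\<^sup>2 = 0"
    by (rule DERIV_abs_le_self_vanishes[OF deriv bound, where a = a])
      (use assms(5,6) in \<open>simp_all add: u_def v_def\<close>)
  then show ?thesis
    by (simp add: u_def v_def)
qed

lemma cylindrical_profile_reflect:
  fixes \<kappa> a :: real and z \<theta> :: "real \<Rightarrow> real"
  assumes dz: "\<And>s. (z has_real_derivative sin (\<theta> s)) (at s)"
    and d\<theta>: "\<And>s. (\<theta> has_real_derivative \<kappa> * z s) (at s)"
  shows "((\<lambda>s. - z (2 * a - s)) has_real_derivative sin (\<theta> (2 * a - s))) (at s)"
    and "((\<lambda>s. \<theta> (2 * a - s)) has_real_derivative \<kappa> * - z (2 * a - s)) (at s)"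
proof -
  have "((\<lambda>s. 2 * a - s) has_real_derivative -1) (at s)"
    by (rule derivative_eq_intros | simp)+
  from DERIV_chain2[OF dz this] DERIV_chain2[OF d\<theta> this]
  show "((\<lambda>s. - z (2 * a - s)) has_real_derivative sin (\<theta> (2 * a - s))) (at s)"
    and "((\<lambda>s. \<theta> (2 * a - s)) has_real_derivative \<kappa> * - z (2 * a - s)) (at s)"
    using DERIV_minus by fastforce+
qed

theorem mainTheorem3:
  fixes \<kappa> s\<^sub>0 :: real and x z \<theta> :: "real \<Rightarrow> real"
  assumes "\<kappa> \<noteq> 0"
    and dx: "\<And>s. (x has_real_derivative cos (\<theta> s)) (at s)"
    and dz: "\<And>s. (z has_real_derivative sin (\<theta> s)) (at s)"
    and d\<theta>: "\<And>s. (\<theta> has_real_derivative \<kappa> * z s) (at s)"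
    and z0: "z s\<^sub>0 = 0"
  shows "\<forall>s. x (s\<^sub>0 + s) + x (s\<^sub>0 - s) = 2 * x s\<^sub>0
            \<and> z (s\<^sub>0 + s) + z (s\<^sub>0 - s) = 2 * z s\<^sub>0"
proof -
  have sym: "- z (2 * s\<^sub>0 - s) = z s \<and> \<theta> (2 * s\<^sub>0 - s) = \<theta> s" for s
    by (rule cylindrical_profile_unique[OF cylindrical_profile_reflect[where a = s\<^sub>0, OF dz d\<theta>]
          dz d\<theta>, where a = s\<^sub>0]) (simp_all add: z0)
  define w where "w s = x s + x (2 * s\<^sub>0 - s)" for s
  have dw: "(w has_real_derivative cos (\<theta> s) - cos (\<theta> (2 * s\<^sub>0 - s))) (at s)" for s
    unfolding w_def by (rule derivative_eq_intros DERIV_chain2[OF dx] dx | simp)+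
  have "(w has_real_derivative 0) (at s)" for s
    using dw[of s] sym[of s] by simp
  then have w_const: "w s = w s\<^sub>0" for s
    using DERIV_isconst_all by blast
  show ?thesis
  proof
    fix s
    have "2 * s\<^sub>0 - (s\<^sub>0 + s) = s\<^sub>0 - s"
      by simp
    then show "x (s\<^sub>0 + s) + x (s\<^sub>0 - s) = 2 * x s\<^sub>0 \<and> z (s\<^sub>0 + s) + z (s\<^sub>0 - s) = 2 * z s\<^sub>0"
      using w_const[of "s\<^sub>0 + s"] sym[of "s\<^sub>0 + s"] z0 unfolding w_def by simp
  qed
qed

end
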